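(* Let $k\ge3$, $n\ge0$, $G\in\mathcal G_k(n)$, and let $v$ be a $G$-good vertex. Then $d_G(v)\le\delta_k(n)$.
   Context: $d_G(v)$ is the degree of vertex $v$ in the hypergraph $G$. For $k\ge3$, $n\ge0$, the family $\mathcal G_k(n)$ of $n$-vertex $k$-uniform hypergraphs is defined inductively: for $n<k$ it consists of the single edgeless $n$-vertex $k$-graph; for $n\ge k$, $G\in\mathcal G_k(n)$ if its vertex set $V$ has a partition $V=V_1\cup\dots\cup V_k$ (the defining partition) with $0\le|V_i|<n$ for all $i$, such that $G[V_i]\in\mathcal G_k(|V_i|)$ for each $i$, and the edges of $G$ are the edges of the $G[V_i]$ together with all $k$-sets having exactly one vertex in each $V_i$. $H_k(n)\in\mathcal G_k(n)$ is defined by: for $n<k$ it is the edgeless graph; for $n\ge k$ its defining partition is equitable ($||V_i|-|V_j||\le1$) and $H_k(n)[V_i]\cong H_k(|V_i|)$ for each $i$. A vertex $v$ of $G\in\mathcal G_k(n)$ is $G$-good if either $n<k$, or $n\ge k$ and, with defining partition $V_1\cup\dots\cup V_k$, $v$ lies in a part $V_i$ of maximum size and $v$ is $G[V_i]$-good. $\delta_k(n)$ denotes $d_{H_k(n)}(v)$ for an $H_k(n)$-good vertex $v$ (all $H_k(n)$-good vertices have the same degree). *)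

theory Defs
  imports Main
begin

definition deg :: "'a set set \<Rightarrow> 'a \<Rightarrow> nat" where
  "deg E v = card {e \<in> E. v \<in> e}"

definition induced :: "'a set set \<Rightarrow> 'a set \<Rightarrow> 'a set set" where
  "induced E S = {e \<in> E. e \<subseteq> S}"

definition is_part :: "nat \<Rightarrow> 'a set \<Rightarrow> (nat \<Rightarrow> 'a set) \<Rightarrow> bool" where
  "is_part k V P \<longleftrightarrow> (\<Union>i<k. P i) = V \<and>
     (\<forall>i<k. \<forall>j<k. i \<noteq> j \<longrightarrow> P i \<inter> P j = {}) \<and> (\<forall>i<k. card (P i) < card V)"

definition transversal :: "nat \<Rightarrow> 'a set \<Rightarrow> (nat \<Rightarrow> 'a set) \<Rightarrow> 'a set set" where
  "transversal k V P = {e. e \<subseteq> V \<and> card e = k \<and> (\<forall>i<k. card (e \<inter> P i) = 1)}"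

inductive inG :: "nat \<Rightarrow> 'a set \<Rightarrow> 'a set set \<Rightarrow> bool" for k where
  base: "finite V \<Longrightarrow> card V < k \<Longrightarrow> inG k V {}"
| step: "finite V \<Longrightarrow> k \<le> card V \<Longrightarrow> is_part k V P \<Longrightarrow>
         (\<forall>i<k. inG k (P i) (induced E (P i))) \<Longrightarrow>
         E = (\<Union>i<k. induced E (P i)) \<union> transversal k V P \<Longrightarrow> inG k V E"

inductive good :: "nat \<Rightarrow> 'a set \<Rightarrow> 'a set set \<Rightarrow> 'a \<Rightarrow> bool" for k where
  base: "finite V \<Longrightarrow> card V < k \<Longrightarrow> v \<in> V \<Longrightarrow> good k V {} v"
| step: "finite V \<Longrightarrow> k \<le> card V \<Longrightarrow> is_part k V P \<Longrightarrow>
         (\<forall>j<k. inG k (P j) (induced E (P j))) \<Longrightarrow>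
         E = (\<Union>j<k. induced E (P j)) \<union> transversal k V P \<Longrightarrow>
         i < k \<Longrightarrow> (\<forall>j<k. card (P j) \<le> card (P i)) \<Longrightarrow> v \<in> P i \<Longrightarrow>
         good k (P i) (induced E (P i)) v \<Longrightarrow> good k V E v"

text \<open>Concrete H_k(n) on vertex set {0..<n}: the equitable partition into consecutive intervals
  of sizes sz k n 0, ..., sz k n (k-1) starting at offsets off k n i.\<close>
definition sz :: "nat \<Rightarrow> nat \<Rightarrow> nat \<Rightarrow> nat" where
  "sz k n i = n div k + (if i < n mod k then 1 else 0)"

definition off :: "nat \<Rightarrow> nat \<Rightarrow> nat \<Rightarrow> nat" where
  "off k n i = (\<Sum>j<i. sz k n j)"

lemma sz_less: "3 \<le> k \<Longrightarrow> k \<le> n \<Longrightarrow> sz k n i < n"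
proof -
  assume a: "3 \<le> k" "k \<le> n"
  have "n div k \<le> n div 3" using a by (simp add: div_le_mono2)
  moreover have "n div 3 + 1 < n" using a by linarith
  ultimately show ?thesis unfolding sz_def by simp
qed

function Hk :: "nat \<Rightarrow> nat \<Rightarrow> nat set set" where
  "Hk k n = (if n < k \<or> k < 3 then {} else
     (\<Union>i<k. (\<lambda>e. (\<lambda>x. x + off k n i) ` e) ` Hk k (sz k n i)) \<union>
     transversal k {0..<n} (\<lambda>i. {off k n i..<off k n i + sz k n i}))"
  by auto
termination
  by (relation "measure (\<lambda>(k,n). n)") (auto intro: sz_less)

function goodH :: "nat \<Rightarrow> nat \<Rightarrow> nat \<Rightarrow> bool" where
  "goodH k n v = (if n < k \<or> k < 3 then v < n else
     (\<exists>i<k. (\<forall>j<k. sz k n j \<le> sz k n i) \<and> off k n i \<le> v \<and> v < off k n i + sz k n i \<and>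
        goodH k (sz k n i) (v - off k n i)))"
  by auto
termination
  by (relation "measure (\<lambda>(k,n,v). n)") (auto intro: sz_less)

definition delta :: "nat \<Rightarrow> nat \<Rightarrow> nat" where
  "delta k n = deg (Hk k n) (SOME v. goodH k n v)"

end

theory Submission
  imports Defs "HOL-Library.Disjoint_Sets"
begin

text \<open>
  Let M(h, m) be the largest product of h natural numbers with sum m (attained by the equitable
  split) and D(n) = D(ceil(n/k)) + M(k - 1, n - ceil(n/k)) for n \<ge> k, D(n) = 0 otherwise.
  If v is good in G with defining partition V_1, ..., V_k and v \<in> V_i, |V_i| = a, then every
  edge through v lies in G[V_i] or is a transversal; there are \<Prod>_{j \<noteq> i} |V_j| \<le> M(k - 1, n - a)
  transversals through v, so by induction d_G(v) \<le> D(a) + M(k - 1, n - a). Since V_i is a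
  largest part, a \<ge> ceil(n/k), and an exchange argument based on the convexity of M shows
  D(a) + M(k - 1, n - a) \<le> D(n). Conversely the partition of H_k(n) is equitable, so each
  H_k(n)-good vertex has degree at least D(n), i.e. D(n) \<le> \<delta>_k(n).
\<close>

declare Hk.simps [simp del] goodH.simps [simp del]

section \<open>Ceiling division\<close>

definition ceil_div :: "nat \<Rightarrow> nat \<Rightarrow> nat" where
  "ceil_div k n = n div k + (if n mod k = 0 then 0 else 1)"

lemma sz_0: "sz k n 0 = ceil_div k n"
  by (simp add: sz_def ceil_div_def)

lemma ceil_div_le_iff:
  assumes "0 < k"
  shows "ceil_div k n \<le> b \<longleftrightarrow> n \<le> k * b"
proof -
  define q r where "q = n div k" and "r = n mod k"
  have n: "n = k * q + r" and "r < k"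
    using assms by (simp_all add: q_def r_def)
  have c: "ceil_div k n = q + (if r = 0 then 0 else 1)"
    by (simp add: ceil_div_def q_def r_def)
  show ?thesis
  proof (cases "r = 0")
    case True
    then have "ceil_div k n = q" by (simp add: c)
    then show ?thesis using assms by (simp add: n True)
  next
    case False
    have "q < b \<longleftrightarrow> k * q + r \<le> k * b"
    proof
      assume "q < b"
      then have "k * Suc q \<le> k * b" by (intro mult_le_mono2) simp
      then show "k * q + r \<le> k * b" using \<open>r < k\<close> by simp
    next
      assume "k * q + r \<le> k * b"
      then have "k * q < k * b" using False by linarith
      then show "q < b" by simp
    qed
    moreover have "ceil_div k n = Suc q" using False by (simp add: c)
    ultimately show ?thesis by (simp add: n Suc_le_eq)
  qed
qed

lemma le_mult_ceil_div: "0 < k \<Longrightarrow> n \<le> k * ceil_div k n"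
  using ceil_div_le_iff by blast

lemma ceil_div_mono: "0 < k \<Longrightarrow> a \<le> n \<Longrightarrow> ceil_div k a \<le> ceil_div k n"
  by (meson ceil_div_le_iff le_mult_ceil_div le_trans)

lemma ceil_div_le_add_diff:
  assumes "0 < k" "a \<le> n"
  shows "ceil_div k n \<le> ceil_div k a + (n - a)"
proof -
  have "n \<le> k * ceil_div k a + (n - a)"
    using assms le_mult_ceil_div[of k a] by linarith
  also have "\<dots> \<le> k * ceil_div k a + k * (n - a)"
    using assms(1) by (intro add_left_mono) simp
  also have "\<dots> = k * (ceil_div k a + (n - a))"
    by (simp only: add_mult_distrib2)
  finally show ?thesis using assms ceil_div_le_iff by blast
qed

lemma ceil_div_add_2_le:
  assumes "3 \<le> k" "k \<le> a"
  shows "ceil_div k a + 2 \<le> a"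
proof -
  have "a \<le> 3 * (a - 2)" using assms by linarith
  also have "\<dots> \<le> k * (a - 2)" using assms by simp
  finally show ?thesis using assms ceil_div_le_iff[of k a "a - 2"] by linarith
qed

lemma ceil_div_pos: "0 < n \<Longrightarrow> 0 < ceil_div k n"
  by (auto simp: ceil_div_def)

section \<open>Maximal products of compositions\<close>

definition max_prod :: "nat \<Rightarrow> nat \<Rightarrow> nat" where
  "max_prod h m = (m div h) ^ (h - m mod h) * Suc (m div h) ^ (m mod h)"

definition max_prod_incr :: "nat \<Rightarrow> nat \<Rightarrow> nat" where
  "max_prod_incr h m = (m div h) ^ (h - Suc (m mod h)) * Suc (m div h) ^ (m mod h)"

lemma max_prod_eq: "r < h \<Longrightarrow> max_prod h (q * h + r) = q ^ (h - r) * Suc q ^ r"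
  by (simp add: max_prod_def)

lemma max_prod_incr_eq: "r < h \<Longrightarrow> max_prod_incr h (q * h + r) = q ^ (h - Suc r) * Suc q ^ r"
  by (simp add: max_prod_incr_def)

lemma max_prod_less: "m < h \<Longrightarrow> max_prod h m = 0"
  by (simp add: max_prod_def)

lemma max_prod_Suc:
  assumes "0 < h"
  shows "max_prod h (Suc m) = max_prod h m + max_prod_incr h m"
proof -
  define q r where "q = m div h" and "r = m mod h"
  have m: "m = q * h + r" and r: "r < h"
    using assms by (simp_all add: q_def r_def)
  have incr: "max_prod_incr h m = q ^ (h - Suc r) * Suc q ^ r"
    unfolding m by (rule max_prod_incr_eq[OF r])
  show ?thesis
  proof (cases "Suc r < h")
    case True
    have "h - r = Suc (h - Suc r)" using True by simp
    then have "max_prod h m = q * (q ^ (h - Suc r) * Suc q ^ r)"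
      unfolding m max_prod_eq[OF r] by simp
    moreover have "max_prod h (Suc m) = Suc q * (q ^ (h - Suc r) * Suc q ^ r)"
      using max_prod_eq[OF True, of q] m by (simp add: algebra_simps)
    ultimately show ?thesis
      using incr by (simp add: algebra_simps)
  next
    case False
    then have h: "h = Suc r" using r by simp
    have "Suc m = Suc q * h + 0" using m h by simp
    then have "max_prod h (Suc m) = Suc q * Suc q ^ r"
      using max_prod_eq[OF assms, of "Suc q"] h by simp
    moreover have "max_prod h m = q * Suc q ^ r"
      unfolding m max_prod_eq[OF r] by (simp add: h)
    ultimately show ?thesis using incr h by simp
  qed
qed

lemma max_prod_incr_le_Suc:
  assumes "0 < h"
  shows "max_prod_incr h m \<le> max_prod_incr h (Suc m)"
proof -
  define q r where "q = m div h" and "r = m mod h"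
  have m: "m = q * h + r" and r: "r < h"
    using assms by (simp_all add: q_def r_def)
  have incr: "max_prod_incr h m = q ^ (h - Suc r) * Suc q ^ r"
    unfolding m by (rule max_prod_incr_eq[OF r])
  show ?thesis
  proof (cases "Suc r < h")
    case True
    have "h - Suc r = Suc (h - Suc (Suc r))" using True by simp
    then have "max_prod_incr h m = q * (q ^ (h - Suc (Suc r)) * Suc q ^ r)"
      using incr by simp
    moreover have "max_prod_incr h (Suc m) = Suc q * (q ^ (h - Suc (Suc r)) * Suc q ^ r)"
      using max_prod_incr_eq[OF True, of q] m by (simp add: algebra_simps)
    ultimately show ?thesis by simp
  next
    case False
    then have h: "h = Suc r" using r by simp
    have "Suc m = Suc q * h + 0" using m h by simp
    then have "max_prod_incr h (Suc m) = Suc q ^ r"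
      using max_prod_incr_eq[OF assms, of "Suc q"] h by simp
    then show ?thesis using incr h by simp
  qed
qed

lemma max_prod_incr_mono: "0 < h \<Longrightarrow> x \<le> y \<Longrightarrow> max_prod_incr h x \<le> max_prod_incr h y"
  by (rule lift_Suc_mono_le[of "max_prod_incr h"]) (simp_all add: max_prod_incr_le_Suc)

lemma max_prod_mono: "0 < h \<Longrightarrow> x \<le> y \<Longrightarrow> max_prod h x \<le> max_prod h y"
  by (rule lift_Suc_mono_le[of "max_prod h"]) (simp_all add: max_prod_Suc)

lemma max_prod_convex:
  assumes "0 < h" "0 < y" "y \<le> Suc x"
  shows "max_prod h y + max_prod h x \<le> max_prod h (y - 1) + max_prod h (Suc x)"
proof -
  have "max_prod_incr h (y - 1) \<le> max_prod_incr h x"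
    using assms by (simp add: max_prod_incr_mono)
  then show ?thesis
    using max_prod_Suc[OF assms(1), of "y - 1"] max_prod_Suc[OF assms(1), of x] assms(2) by simp
qed

lemma max_prod_split_off_ceil_div:
  assumes "2 \<le> k"
  shows "max_prod k n = ceil_div k n * max_prod (k - 1) (n - ceil_div k n)"
proof -
  define q r where "q = n div k" and "r = n mod k"
  have n: "n = q * k + r" and r: "r < k"
    using assms by (simp_all add: q_def r_def)
  obtain h where k: "k = Suc h" using assms by (cases k) auto
  have c: "ceil_div k n = q + (if r = 0 then 0 else 1)"
    by (simp add: ceil_div_def q_def r_def)
  show ?thesis
  proof (cases r)
    case 0
    have cq: "ceil_div k n = q" using c 0 by simp
    have "max_prod h (n - q) = q ^ h"
      using max_prod_eq[of 0 h q] assms k by (simp add: n 0)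
    moreover have "max_prod k n = q * q ^ h"
      using max_prod_eq[OF r, of q] by (simp add: n 0 k)
    ultimately show ?thesis unfolding cq by (simp add: k)
  next
    case (Suc s)
    have cq: "ceil_div k n = Suc q" using c Suc by simp
    have "max_prod h (n - Suc q) = q ^ (h - s) * Suc q ^ s"
      using max_prod_eq[of s h q] r k by (simp add: n Suc)
    moreover have "max_prod k n = Suc q * (q ^ (h - s) * Suc q ^ s)"
      using max_prod_eq[OF r, of q] by (simp add: n Suc k algebra_simps)
    ultimately show ?thesis unfolding cq by (simp add: k)
  qed
qed

lemma balancing_step:
  fixes f :: "'b \<Rightarrow> nat"
  assumes J: "finite J" "a \<in> J" "b \<in> J" and gap: "f b + 2 \<le> f a"
  defines "g \<equiv> f(a := f a - 1, b := f b + 1)"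
  shows "sum g J = sum f J" and "prod f J \<le> prod g J"
    and "(\<Sum>j\<in>J. g j ^ 2) < (\<Sum>j\<in>J. f j ^ 2)"
proof -
  define R where "R = J - {a, b}"
  have "a \<noteq> b" using gap by auto
  then have ga: "g a = f a - 1" and gb: "g b = f b + 1" and rest: "\<And>j. j \<in> R \<Longrightarrow> g j = f j"
    by (simp_all add: g_def R_def)
  have J_eq: "J = insert a (insert b R)" and "a \<notin> insert b R" "b \<notin> R" "finite R"
    using J \<open>a \<noteq> b\<close> by (auto simp: R_def)
  then have sum_J: "sum u J = u a + u b + sum u R"
    and prod_J: "prod u J = u a * u b * prod u R" for u :: "'b \<Rightarrow> nat"
    by (simp_all add: J_eq)
  obtain t where t: "f a = f b + 2 + t" using gap le_Suc_ex by metis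
  show "sum g J = sum f J"
    using ga gb t rest by (simp add: sum_J)
  show "prod f J \<le> prod g J"
    using ga gb t rest by (simp add: prod_J algebra_simps)
  show "(\<Sum>j\<in>J. g j ^ 2) < (\<Sum>j\<in>J. f j ^ 2)"
    using ga gb t rest by (simp add: sum_J power2_eq_square algebra_simps)
qed

lemma prod_eq_max_prod_if_balanced:
  fixes f :: "'b \<Rightarrow> nat"
  assumes J: "finite J" "J \<noteq> {}" and balanced: "\<And>a b. a \<in> J \<Longrightarrow> b \<in> J \<Longrightarrow> f a \<le> f b + 1"
  shows "prod f J = max_prod (card J) (sum f J)"
proof -
  define m where "m = Min (f ` J)"
  have "m \<in> f ` J" using J by (simp add: m_def)
  then obtain j0 where j0: "j0 \<in> J" "f j0 = m" by blast
  have ge: "\<And>j. j \<in> J \<Longrightarrow> m \<le> f j" using J by (simp add: m_def)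
  define L where "L = {j \<in> J. f j = m}"
  define s where "s = card (J - L)"
  have L: "L \<subseteq> J" "finite L" "j0 \<in> L" using J j0 by (auto simp: L_def)
  have low: "\<And>j. j \<in> L \<Longrightarrow> f j = m" by (simp add: L_def)
  have high: "f j = Suc m" if "j \<in> J - L" for j
  proof -
    have "f j \<le> Suc m" "m \<le> f j" "f j \<noteq> m"
      using that balanced[OF _ j0(1), of j] ge[of j] j0(2) by (auto simp: L_def)
    then show ?thesis by linarith
  qed
  have "0 < card L" using L by (auto simp: card_gt_0_iff)
  then have cL: "card L = card J - s" and s: "s < card J"
    using card_Diff_subset[OF L(2,1)] card_mono[OF J(1) L(1)] by (auto simp: s_def)
  have "prod f J = prod f (J - L) * prod f L"
    using prod.subset_diff[OF L(1) J(1)] .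
  also have "\<dots> = m ^ (card J - s) * Suc m ^ s"
    using low high cL by (simp add: s_def)
  also have "\<dots> = max_prod (card J) (m * card J + s)"
    using max_prod_eq[OF s] by simp
  also have "m * card J + s = sum f J"
  proof -
    have "sum f J = sum f (J - L) + sum f L"
      using sum.subset_diff[OF L(1) J(1)] .
    also have "\<dots> = s * Suc m + (card J - s) * m"
      using low high cL by (simp add: s_def)
    finally show ?thesis using s by (simp add: algebra_simps diff_mult_distrib)
  qed
  finally show ?thesis .
qed

lemma prod_le_max_prod:
  fixes f :: "'b \<Rightarrow> nat"
  assumes "finite J" "J \<noteq> {}"
  shows "prod f J \<le> max_prod (card J) (sum f J)"
  using assms
proof (induction "\<Sum>j\<in>J. f j ^ 2" arbitrary: f rule: less_induct)
  case less
  show ?case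
  proof (cases "\<exists>a\<in>J. \<exists>b\<in>J. f b + 2 \<le> f a")
    case True
    then obtain a b where ab: "a \<in> J" "b \<in> J" "f b + 2 \<le> f a" by blast
    note step = balancing_step[OF less.prems(1) ab]
    have "prod f J \<le> prod (f(a := f a - 1, b := f b + 1)) J" by (rule step(2))
    also have "\<dots> \<le> max_prod (card J) (sum f J)"
      using less.hyps[OF step(3) less.prems] step(1) by simp
    finally show ?thesis .
  next
    case False
    then have "\<And>a b. a \<in> J \<Longrightarrow> b \<in> J \<Longrightarrow> f a \<le> f b + 1" by fastforce
    then have "prod f J = max_prod (card J) (sum f J)"
      by (rule prod_eq_max_prod_if_balanced[OF less.prems])
    then show ?thesis by simp
  qed
qed

section \<open>The recursion for \<delta>\<close>

text \<open>The two summands count the edges through a good vertex of H_k(n) inside its part of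
  size ceil(n/k) and the transversal edges through it.\<close>

function delta_rec :: "nat \<Rightarrow> nat \<Rightarrow> nat" where
  "delta_rec k n = (if n < k \<or> k < 3 then 0
     else delta_rec k (ceil_div k n) + max_prod (k - 1) (n - ceil_div k n))"
  by auto
termination
proof (relation "measure (\<lambda>(k, n). n)")
  fix k n :: nat
  assume "\<not> (n < k \<or> k < 3)"
  then show "((k, ceil_div k n), k, n) \<in> measure (\<lambda>(k, n). n)"
    using ceil_div_add_2_le[of k n] by simp
qed simp

declare delta_rec.simps [simp del]

lemma delta_rec_less: "n < k \<Longrightarrow> delta_rec k n = 0"
  by (simp add: delta_rec.simps)

lemma delta_rec_eq:
  "3 \<le> k \<Longrightarrow> k \<le> n \<Longrightarrow> delta_rec k n = delta_rec k (ceil_div k n) + max_prod (k - 1) (n - ceil_div k n)"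
  by (simp add: delta_rec.simps)

text \<open>Write c = ceil(a/k), y = a - c, x = n - a. If y \<le> x + 1, moving one vertex from the
  y-side to the x-side does not decrease the max_prod terms (convexity), which reduces a to a - 1;
  otherwise c and x are merged into a single part of size c + x < a.\<close>

lemma delta_rec_split_le_step:
  assumes k: "3 \<le> k" and a: "ceil_div k n < a" "k \<le> a" "a < n"
    and outer: "\<And>m b. m < n \<Longrightarrow> ceil_div k m \<le> b \<Longrightarrow> b < m \<Longrightarrow>
      delta_rec k b + max_prod (k - 1) (m - b) \<le> delta_rec k m"
    and inner: "\<And>b. ceil_div k n \<le> b \<Longrightarrow> b < a \<Longrightarrow>
      delta_rec k b + max_prod (k - 1) (n - b) \<le> delta_rec k n"
  shows "delta_rec k a + max_prod (k - 1) (n - a) \<le> delta_rec k n"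
proof -
  define c x y where "c = ceil_div k a" and "x = n - a" and "y = a - c"
  have "c + 2 \<le> a" "0 < x" using ceil_div_add_2_le[OF k a(2)] a(3) by (simp_all add: c_def x_def)
  have delta_a: "delta_rec k a = delta_rec k c + max_prod (k - 1) y"
    using delta_rec_eq[OF k a(2)] by (simp add: c_def y_def)
  show ?thesis
  proof (cases "y \<le> Suc x")
    case True
    have "max_prod (k - 1) y + max_prod (k - 1) x \<le> max_prod (k - 1) (y - 1) + max_prod (k - 1) (Suc x)"
      using max_prod_convex[OF _ _ True] k \<open>c + 2 \<le> a\<close> by (simp add: y_def)
    moreover have "delta_rec k c + max_prod (k - 1) (y - 1) \<le> delta_rec k (a - 1)"
      using outer[of "a - 1" c] ceil_div_mono[of k "a - 1" a] k a \<open>c + 2 \<le> a\<close>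
      by (simp add: c_def y_def)
    moreover have "delta_rec k (a - 1) + max_prod (k - 1) (Suc x) \<le> delta_rec k n"
      using inner[of "a - 1"] a by (simp add: x_def Suc_diff_le)
    ultimately show ?thesis using delta_a by (simp add: x_def)
  next
    case False
    define b where "b = c + x"
    have "a \<le> k * c" using le_mult_ceil_div k by (simp add: c_def)
    then have "ceil_div k b \<le> c" using False ceil_div_le_iff[of k b c] k by (simp add: b_def y_def)
    then have "delta_rec k c + max_prod (k - 1) x \<le> delta_rec k b"
      using outer[of b c] False \<open>0 < x\<close> a(3) by (simp add: b_def x_def y_def)
    moreover have "delta_rec k b + max_prod (k - 1) y \<le> delta_rec k n"
      using inner[of b] ceil_div_le_add_diff[of k a n] False k a(3)
      by (simp add: b_def c_def x_def y_def)
    ultimately show ?thesis using delta_a by (simp add: x_def)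
  qed
qed

lemma delta_rec_split_le:
  assumes k: "3 \<le> k"
  shows "ceil_div k n \<le> a \<Longrightarrow> a < n \<Longrightarrow> delta_rec k a + max_prod (k - 1) (n - a) \<le> delta_rec k n"
proof (induction n arbitrary: a rule: less_induct)
  case (less n)
  note outer = less.IH
  show ?case
  proof (cases "n < k")
    case True
    have "0 < ceil_div k n" using less.prems by (simp add: ceil_div_pos)
    then have "n - a < k - 1" using less.prems True by linarith
    then show ?thesis using True less.prems by (simp add: delta_rec_less max_prod_less)
  next
    case False
    from less.prems show ?thesis
    proof (induction a rule: less_induct)
      case (less a)
      consider "a = ceil_div k n" | "ceil_div k n < a" "a < k" | "ceil_div k n < a" "k \<le> a"
        using less.prems by linarith
      then show ?case
      proof cases
        case 1
        then show ?thesis using delta_rec_eq[OF k] False by simp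
      next
        case 2
        have "delta_rec k (a - 1) + max_prod (k - 1) (n - (a - 1)) \<le> delta_rec k n"
          by (rule less.IH) (use 2 less.prems in auto)
        moreover have "max_prod (k - 1) (n - a) \<le> max_prod (k - 1) (n - (a - 1))"
          using k by (simp add: max_prod_mono)
        ultimately show ?thesis using 2 by (simp add: delta_rec_less)
      next
        case 3
        show ?thesis
          by (rule delta_rec_split_le_step[OF k 3 less.prems(2) outer less.IH])
            (use less.prems(2) in simp_all)
      qed
    qed
  qed
qed

section \<open>Transversal edges\<close>

lemma disjoint_family_on_index_unique:
  "disjoint_family_on P I \<Longrightarrow> i \<in> I \<Longrightarrow> j \<in> I \<Longrightarrow> x \<in> P i \<Longrightarrow> x \<in> P j \<Longrightarrow> i = j"
  unfolding disjoint_family_on_def by blast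

lemma image_Int_disjoint_family:
  assumes "disjoint_family_on P I" "f \<in> (\<Pi>\<^sub>E j\<in>I. P j)" "j \<in> I"
  shows "f ` I \<inter> P j = {f j}"
proof -
  have "x = j" if "x \<in> I" "f x \<in> P j" for x
    using disjoint_family_on_index_unique[OF assms(1) that(1) assms(3) _ that(2)] assms(2) that(1) by auto
  then show ?thesis using assms(2,3) by auto
qed

lemma inj_on_image_PiE:
  assumes "disjoint_family_on P I"
  shows "inj_on (\<lambda>f. f ` I) (\<Pi>\<^sub>E j\<in>I. P j)"
proof (rule inj_onI)
  fix f g assume f: "f \<in> (\<Pi>\<^sub>E j\<in>I. P j)" and g: "g \<in> (\<Pi>\<^sub>E j\<in>I. P j)" and eq: "f ` I = g ` I"
  show "f = g"
  proof (rule PiE_ext[OF f g])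
    fix j assume "j \<in> I"
    then have "{f j} = {g j}"
      using image_Int_disjoint_family[OF assms f] image_Int_disjoint_family[OF assms g] eq by metis
    then show "f j = g j" by simp
  qed
qed

lemma transversal_eq_image_PiE:
  assumes disj: "disjoint_family_on P {..<k}" and cover: "(\<Union>j<k. P j) = V"
  shows "transversal k V P = (\<lambda>f. f ` {..<k}) ` (\<Pi>\<^sub>E j\<in>{..<k}. P j)"
proof (intro equalityI subsetI)
  fix e assume "e \<in> transversal k V P"
  then have "e \<subseteq> V" and one: "\<And>j. j < k \<Longrightarrow> card (e \<inter> P j) = 1"
    by (auto simp: transversal_def)
  define f where "f = restrict (\<lambda>j. the_elem (e \<inter> P j)) {..<k}"
  have single: "e \<inter> P j = {f j}" if j: "j < k" for j
  proof -
    obtain y where "e \<inter> P j = {y}" using one[OF j] card_1_singleton_iff[of "e \<inter> P j"] by auto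
    then show ?thesis using j by (simp add: f_def)
  qed
  have "f \<in> extensional {..<k}" by (simp add: f_def)
  moreover have "f j \<in> P j" if "j < k" for j using single[OF that] by blast
  ultimately have "f \<in> (\<Pi>\<^sub>E j\<in>{..<k}. P j)" by (simp add: PiE_iff)
  moreover have "e = f ` {..<k}"
  proof
    show "e \<subseteq> f ` {..<k}"
    proof
      fix x assume "x \<in> e"
      then obtain j where "j < k" "x \<in> P j" using \<open>e \<subseteq> V\<close> cover by blast
      then have "x = f j" using single[of j] \<open>x \<in> e\<close> by blast
      then show "x \<in> f ` {..<k}" using \<open>j < k\<close> by simp
    qed
    show "f ` {..<k} \<subseteq> e"
    proof (rule image_subsetI)
      fix j assume "j \<in> {..<k}"
      then show "f j \<in> e" using single[of j] by blast
    qed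
  qed
  ultimately show "e \<in> (\<lambda>f. f ` {..<k}) ` (\<Pi>\<^sub>E j\<in>{..<k}. P j)" by blast
next
  fix e assume "e \<in> (\<lambda>f. f ` {..<k}) ` (\<Pi>\<^sub>E j\<in>{..<k}. P j)"
  then obtain f where f: "f \<in> (\<Pi>\<^sub>E j\<in>{..<k}. P j)" and e: "e = f ` {..<k}" by blast
  have "inj_on f {..<k}"
  proof (rule inj_onI)
    fix i j assume ij: "i \<in> {..<k}" "j \<in> {..<k}" and "f i = f j"
    then have "f i \<in> P i" "f i \<in> P j" using PiE_mem[OF f] by metis+
    then show "i = j" using disjoint_family_on_index_unique[OF disj ij] by blast
  qed
  then have "card e = k" by (simp add: e card_image)
  moreover have "e \<subseteq> V"
  proof (unfold e, rule image_subsetI)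
    fix j assume "j \<in> {..<k}"
    then show "f j \<in> V" using PiE_mem[OF f] cover by blast
  qed
  moreover have "card (e \<inter> P j) = 1" if "j < k" for j
    using image_Int_disjoint_family[OF disj f, of j] that by (simp add: e)
  ultimately show "e \<in> transversal k V P" by (simp add: transversal_def)
qed

lemma card_transversal_through:
  assumes disj: "disjoint_family_on P {..<k}" and cover: "(\<Union>j<k. P j) = V"
    and i: "i < k" "v \<in> P i"
  shows "card {e \<in> transversal k V P. v \<in> e} = (\<Prod>j\<in>{..<k} - {i}. card (P j))"
proof -
  define F where "F = {f \<in> (\<Pi>\<^sub>E j\<in>{..<k}. P j). f i = v}"
  have through: "v \<in> f ` {..<k} \<longleftrightarrow> f i = v" if "f \<in> (\<Pi>\<^sub>E j\<in>{..<k}. P j)" for f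
  proof -
    have "f ` {..<k} \<inter> P i = {f i}" using image_Int_disjoint_family[OF disj that] i by simp
    then show ?thesis using i by (metis IntI lessThan_iff rev_image_eqI singletonD)
  qed
  have "{e \<in> transversal k V P. v \<in> e} = (\<lambda>f. f ` {..<k}) ` F"
  proof (intro equalityI subsetI)
    fix e assume "e \<in> {e \<in> transversal k V P. v \<in> e}"
    then obtain f where f: "f \<in> (\<Pi>\<^sub>E j\<in>{..<k}. P j)" and e: "e = f ` {..<k}" and "v \<in> e"
      unfolding transversal_eq_image_PiE[OF disj cover] by blast
    then have "f \<in> F" using through[OF f] by (simp add: F_def)
    then show "e \<in> (\<lambda>f. f ` {..<k}) ` F" unfolding e by (rule imageI)
  next
    fix e assume "e \<in> (\<lambda>f. f ` {..<k}) ` F"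
    then obtain f where f: "f \<in> (\<Pi>\<^sub>E j\<in>{..<k}. P j)" "f i = v" and e: "e = f ` {..<k}"
      by (auto simp: F_def)
    then show "e \<in> {e \<in> transversal k V P. v \<in> e}"
      using through[OF f(1)] unfolding transversal_eq_image_PiE[OF disj cover] by blast
  qed
  moreover have "inj_on (\<lambda>f. f ` {..<k}) F"
    using inj_on_image_PiE[OF disj] by (rule inj_on_subset) (auto simp: F_def)
  moreover have "F = (\<Pi>\<^sub>E j\<in>{..<k}. (P(i := {v})) j)"
  proof (intro equalityI subsetI)
    fix f assume f: "f \<in> F"
    have "f j \<in> (P(i := {v})) j" if "j < k" for j
      using f that by (cases "j = i") (auto simp: F_def)
    moreover have "f \<in> extensional {..<k}" using f by (simp add: F_def PiE_def)
    ultimately show "f \<in> (\<Pi>\<^sub>E j\<in>{..<k}. (P(i := {v})) j)" by (simp add: PiE_iff)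
  next
    fix f assume f: "f \<in> (\<Pi>\<^sub>E j\<in>{..<k}. (P(i := {v})) j)"
    have "f j \<in> P j" if "j < k" for j
      using PiE_mem[OF f, of j] that i(2) by (cases "j = i") auto
    moreover have "f i = v" using PiE_mem[OF f, of i] i(1) by simp
    moreover have "f \<in> extensional {..<k}" using f by (simp add: PiE_def)
    ultimately show "f \<in> F" by (simp add: F_def PiE_iff)
  qed
  ultimately have "card {e \<in> transversal k V P. v \<in> e} = (\<Prod>j<k. card ((P(i := {v})) j))"
    by (simp add: card_image card_PiE)
  also have "\<dots> = card ((P(i := {v})) i) * (\<Prod>j\<in>{..<k} - {i}. card ((P(i := {v})) j))"
    by (rule prod.remove) (use i in auto)
  also have "\<dots> = (\<Prod>j\<in>{..<k} - {i}. card (P j))"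
    by (auto intro!: prod.cong)
  finally show ?thesis .
qed

section \<open>Degrees of good vertices\<close>

lemma is_part_disjoint_family_on: "is_part k V P \<Longrightarrow> disjoint_family_on P {..<k}"
  by (auto simp: is_part_def disjoint_family_on_def)

lemma is_part_cover: "is_part k V P \<Longrightarrow> (\<Union>j<k. P j) = V"
  by (simp add: is_part_def)

lemma sum_card_is_part:
  assumes "finite V" "is_part k V P"
  shows "(\<Sum>j<k. card (P j)) = card V"
proof -
  have fin: "finite (P j)" if "j < k" for j
  proof (rule finite_subset[OF _ assms(1)])
    show "P j \<subseteq> V" using is_part_cover[OF assms(2)] that by blast
  qed
  have "card (\<Union>j<k. P j) = (\<Sum>j<k. card (P j))"
    by (rule card_UN_disjoint'[OF is_part_disjoint_family_on[OF assms(2)]]) (use fin in auto)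
  then show ?thesis using is_part_cover[OF assms(2)] by simp
qed

lemma ceil_div_le_card_largest_part:
  assumes "finite V" "is_part k V P" "i < k" and largest: "\<forall>j<k. card (P j) \<le> card (P i)"
  shows "ceil_div k (card V) \<le> card (P i)"
proof -
  have "card V \<le> (\<Sum>j<k. card (P i))"
    unfolding sum_card_is_part[OF assms(1,2), symmetric] using largest by (intro sum_mono) simp
  then show ?thesis using assms(3) by (simp add: ceil_div_le_iff)
qed

lemma deg_le_deg_induced_add_transversal:
  assumes "finite V" and part: "is_part k V P"
    and E: "E = (\<Union>j<k. induced E (P j)) \<union> transversal k V P" and i: "i < k" "v \<in> P i"
  shows "deg E v \<le> deg (induced E (P i)) v + card {e \<in> transversal k V P. v \<in> e}"
proof -
  have "{e \<in> E. v \<in> e} \<subseteq> {e \<in> induced E (P i). v \<in> e} \<union> {e \<in> transversal k V P. v \<in> e}"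
  proof
    fix e assume e: "e \<in> {e \<in> E. v \<in> e}"
    show "e \<in> {e \<in> induced E (P i). v \<in> e} \<union> {e \<in> transversal k V P. v \<in> e}"
    proof (cases "e \<in> transversal k V P")
      case False
      then obtain j where j: "j < k" "e \<in> induced E (P j)" using e E by blast
      then have "v \<in> P j" using e by (auto simp: induced_def)
      then have "j = i"
        using disjoint_family_on_index_unique[OF is_part_disjoint_family_on[OF part]] i j(1) by blast
      then show ?thesis using j e by simp
    qed (use e in simp)
  qed
  moreover have "finite ({e \<in> induced E (P i). v \<in> e} \<union> {e \<in> transversal k V P. v \<in> e})"
  proof (rule finite_subset)
    show "finite (Pow V)" using assms(1) by simp
    show "{e \<in> induced E (P i). v \<in> e} \<union> {e \<in> transversal k V P. v \<in> e} \<subseteq> Pow V"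
      using is_part_cover[OF part] i(1) by (auto simp: induced_def transversal_def)
  qed
  ultimately have "deg E v \<le> card ({e \<in> induced E (P i). v \<in> e} \<union> {e \<in> transversal k V P. v \<in> e})"
    unfolding deg_def by (rule card_mono[rotated])
  also have "\<dots> \<le> deg (induced E (P i)) v + card {e \<in> transversal k V P. v \<in> e}"
    unfolding deg_def by (rule card_Un_le)
  finally show ?thesis .
qed

lemma card_transversal_through_le:
  assumes "finite V" and part: "is_part k V P" and "2 \<le> k" and i: "i < k" "v \<in> P i"
  shows "card {e \<in> transversal k V P. v \<in> e} \<le> max_prod (k - 1) (card V - card (P i))"
proof -
  define K where "K = {..<k} - {i}"
  have "(if i = 0 then 1 else 0) \<in> K" using assms(3) by (auto simp: K_def)
  then have K: "finite K" "K \<noteq> {}" "card K = k - 1"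
    using i(1) by (auto simp: K_def)
  have "card V = card (P i) + (\<Sum>j\<in>K. card (P j))"
    unfolding sum_card_is_part[OF assms(1) part, symmetric] K_def using i(1) by (simp add: sum.remove)
  moreover have "card {e \<in> transversal k V P. v \<in> e} = (\<Prod>j\<in>K. card (P j))"
    unfolding K_def
    by (rule card_transversal_through[OF is_part_disjoint_family_on[OF part] is_part_cover[OF part] i])
  ultimately show ?thesis
    using prod_le_max_prod[OF K(1,2), of "\<lambda>j. card (P j)"] K(3) by simp
qed

lemma deg_le_delta_rec:
  assumes k: "3 \<le> k"
  shows "good k V E v \<Longrightarrow> deg E v \<le> delta_rec k (card V)"
proof (induction rule: good.induct)
  case (base V v)
  then show ?case by (simp add: deg_def)
next
  case (step V P E i v)
  have "deg E v \<le> deg (induced E (P i)) v + card {e \<in> transversal k V P. v \<in> e}"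
    by (rule deg_le_deg_induced_add_transversal[OF step.hyps(1,3,5,6,8)])
  also have "\<dots> \<le> delta_rec k (card (P i)) + max_prod (k - 1) (card V - card (P i))"
    using step.IH card_transversal_through_le[of V k P i v] step.hyps k by simp
  also have "\<dots> \<le> delta_rec k (card V)"
  proof (rule delta_rec_split_le[OF k])
    show "ceil_div k (card V) \<le> card (P i)"
      by (rule ceil_div_le_card_largest_part[OF step.hyps(1,3,6,7)])
    show "card (P i) < card V" using step.hyps(3,6) by (simp add: is_part_def)
  qed
  finally show ?case .
qed

section \<open>The hypergraph H_k(n)\<close>

text \<open>An abbreviation rather than a definition, so that it matches the partition in Hk.simps.\<close>
abbreviation block :: "nat \<Rightarrow> nat \<Rightarrow> nat \<Rightarrow> nat set" where
  "block k n j \<equiv> {off k n j..<off k n j + sz k n j}"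

lemma off_Suc: "off k n (Suc i) = off k n i + sz k n i"
  by (simp add: off_def)

lemma off_eq: "off k n i = i * (n div k) + min i (n mod k)"
  by (induction i) (auto simp: off_Suc sz_def off_def[of k n 0])

lemma off_self: "0 < k \<Longrightarrow> off k n k = n"
  by (simp add: off_eq mult.commute)

lemma off_mono: "i \<le> j \<Longrightarrow> off k n i \<le> off k n j"
  unfolding off_eq by (intro add_mono mult_le_mono1) auto

lemma UN_block: "(\<Union>j<m. block k n j) = {0..<off k n m}"
proof (induction m)
  case 0
  then show ?case by (simp add: off_def)
next
  case (Suc m)
  have "(\<Union>j<Suc m. block k n j) = {0..<off k n m} \<union> {off k n m..<off k n (Suc m)}"
    using Suc by (simp add: lessThan_Suc off_Suc Un_commute)
  also have "\<dots> = {0..<off k n (Suc m)}" using off_mono[of m "Suc m" k n] by auto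
  finally show ?case .
qed

lemma disjoint_family_block: "disjoint_family (block k n)"
  unfolding disjoint_family_on_def
proof (intro ballI impI)
  fix i j :: nat assume "i \<noteq> j"
  then consider "Suc i \<le> j" | "Suc j \<le> i" by linarith
  then show "block k n i \<inter> block k n j = {}"
    by cases (use off_mono[of "Suc i" j k n] off_mono[of "Suc j" i k n] in \<open>auto simp: off_Suc\<close>)
qed

lemma sz_le_sz_0: "sz k n j \<le> sz k n 0"
  by (simp add: sz_def)

lemma prod_sz:
  assumes "0 < k"
  shows "(\<Prod>j<k. sz k n j) = max_prod k n"
proof -
  have r: "n mod k < k" using assms by simp
  have "(\<Prod>j<k. sz k n j) = (\<Prod>j<n mod k. Suc (n div k)) * (\<Prod>j\<in>{n mod k..<k}. n div k)"
    using prod.atLeastLessThan_concat[of 0 "n mod k" k "sz k n"] r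
    by (simp add: sz_def atLeast0LessThan)
  then show ?thesis by (simp add: max_prod_def mult.commute)
qed

lemma Hk_eq:
  assumes "3 \<le> k" "k \<le> n"
  shows "Hk k n = (\<Union>i<k. (\<lambda>e. (\<lambda>x. x + off k n i) ` e) ` Hk k (sz k n i))
    \<union> transversal k {0..<n} (block k n)"
  using assms by (subst Hk.simps) simp

lemma goodH_iff:
  assumes "3 \<le> k" "k \<le> n"
  shows "goodH k n v \<longleftrightarrow> (\<exists>i<k. (\<forall>j<k. sz k n j \<le> sz k n i) \<and> v \<in> block k n i
    \<and> goodH k (sz k n i) (v - off k n i))"
  using assms by (subst goodH.simps) auto

lemma Hk_subset: "e \<in> Hk k n \<Longrightarrow> e \<subseteq> {0..<n}"
proof (induction n arbitrary: e rule: less_induct)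
  case (less n)
  show ?case
  proof (cases "n < k \<or> k < 3")
    case True
    then show ?thesis using less.prems by (simp add: Hk.simps)
  next
    case False
    then have k: "3 \<le> k" "k \<le> n" by auto
    from less.prems consider
        i e0 where "i < k" "e0 \<in> Hk k (sz k n i)" "e = (\<lambda>x. x + off k n i) ` e0"
      | "e \<in> transversal k {0..<n} (block k n)"
      unfolding Hk_eq[OF k] by blast
    then show ?thesis
    proof cases
      case 1
      have "e0 \<subseteq> {0..<sz k n i}" using less.IH[OF sz_less[OF k] 1(2)] .
      moreover have "off k n (Suc i) \<le> n"
        using off_mono[of "Suc i" k k n] off_self[of k n] 1(1) k by simp
      ultimately show ?thesis using 1(3) by (auto simp: off_Suc)
    next
      case 2
      then show ?thesis by (simp add: transversal_def)
    qed
  qed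
qed

lemma goodH_0: "3 \<le> k \<Longrightarrow> 0 < n \<Longrightarrow> goodH k n 0"
proof (induction n rule: less_induct)
  case (less n)
  show ?case
  proof (cases "n < k")
    case True
    then show ?thesis using less.prems by (simp add: goodH.simps)
  next
    case False
    then have k: "3 \<le> k" "k \<le> n" using less.prems by auto
    have "0 < sz k n 0" using less.prems by (simp add: sz_0 ceil_div_pos)
    then have "goodH k (sz k n 0) 0" using less.IH[OF sz_less[OF k]] k by blast
    then show ?thesis
      using \<open>0 < sz k n 0\<close> k sz_le_sz_0 unfolding goodH_iff[OF k]
      by (intro exI[of _ 0]) (simp add: off_def)
  qed
qed

lemma transversal_not_subset_part:
  assumes "2 \<le> k" "disjoint_family_on P {..<k}" "i < k" "e \<in> transversal k V P"
  shows "\<not> e \<subseteq> P i"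
proof
  assume "e \<subseteq> P i"
  define j :: nat where "j = (if i = 0 then 1 else 0)"
  have j: "j < k" "j \<noteq> i" using assms(1,3) by (auto simp: j_def)
  then have "P i \<inter> P j = {}" using disjoint_family_onD[OF assms(2)] assms(3) by simp
  then have "e \<inter> P j = {}" using \<open>e \<subseteq> P i\<close> by blast
  moreover have "card (e \<inter> P j) = 1" using assms(4) j(1) by (simp add: transversal_def)
  ultimately show False by simp
qed

lemma deg_Hk_ge:
  assumes k: "3 \<le> k" "k \<le> n" and i: "i < k" "v \<in> block k n i"
  shows "deg (Hk k (sz k n i)) (v - off k n i) + card {e \<in> transversal k {0..<n} (block k n). v \<in> e}
    \<le> deg (Hk k n) v"
proof -
  define shift where "shift = (\<lambda>e. (\<lambda>x. x + off k n i) ` e)"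
  define A where "A = shift ` {e \<in> Hk k (sz k n i). v - off k n i \<in> e}"
  define B where "B = {e \<in> transversal k {0..<n} (block k n). v \<in> e}"
  have A: "A \<subseteq> {e \<in> Hk k n. v \<in> e}"
  proof
    fix e assume "e \<in> A"
    then obtain e0 where e0: "e0 \<in> Hk k (sz k n i)" "v - off k n i \<in> e0" and e: "e = shift e0"
      by (auto simp: A_def)
    have "e \<in> (\<lambda>e. (\<lambda>x. x + off k n i) ` e) ` Hk k (sz k n i)"
      using e0(1) unfolding e shift_def by (rule imageI)
    then have "e \<in> Hk k n" unfolding Hk_eq[OF k] using i(1) by blast
    moreover have "v \<in> e" using e0(2) i(2) unfolding e shift_def by (auto intro: rev_image_eqI)
    ultimately show "e \<in> {e \<in> Hk k n. v \<in> e}" by simp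
  qed
  have B: "B \<subseteq> {e \<in> Hk k n. v \<in> e}" unfolding B_def Hk_eq[OF k] by blast
  have "finite {e \<in> Hk k n. v \<in> e}"
    by (rule finite_subset[of _ "Pow {0..<n}"]) (use Hk_subset in auto)
  then have fin: "finite A" "finite B" using A B finite_subset by auto
  have "e \<notin> B" if "e \<in> A" for e
  proof -
    have "e \<subseteq> block k n i" using that Hk_subset by (fastforce simp: A_def shift_def)
    then show ?thesis
      using transversal_not_subset_part[OF _ disjoint_family_on_mono[OF _ disjoint_family_block] i(1)] k
      by (auto simp: B_def)
  qed
  then have "A \<inter> B = {}" by blast
  have "inj (\<lambda>x. x + off k n i)" by (simp add: inj_on_def)
  then have "inj_on shift X" for X by (simp add: shift_def inj_on_def inj_image_eq_iff)
  then have "card A = deg (Hk k (sz k n i)) (v - off k n i)"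
    unfolding A_def deg_def by (rule card_image)
  moreover have "card A + card B = card (A \<union> B)"
    using card_Un_disjoint[OF fin \<open>A \<inter> B = {}\<close>] by simp
  moreover have "card (A \<union> B) \<le> deg (Hk k n) v"
    unfolding deg_def using A B \<open>finite {e \<in> Hk k n. v \<in> e}\<close> by (intro card_mono) auto
  ultimately show ?thesis by (simp add: B_def)
qed

lemma delta_rec_le_deg_Hk:
  assumes k: "3 \<le> k"
  shows "goodH k n v \<Longrightarrow> delta_rec k n \<le> deg (Hk k n) v"
proof (induction n arbitrary: v rule: less_induct)
  case (less n)
  show ?case
  proof (cases "n < k")
    case True
    then show ?thesis by (simp add: delta_rec_less)
  next
    case False
    then have kn: "k \<le> n" by simp
    obtain i where i: "i < k" "\<forall>j<k. sz k n j \<le> sz k n i" "v \<in> block k n i"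
      and good: "goodH k (sz k n i) (v - off k n i)"
      using less.prems unfolding goodH_iff[OF k kn] by blast
    have "sz k n 0 \<le> sz k n i" using i(2) k by simp
    then have szi: "sz k n i = ceil_div k n" using sz_le_sz_0[of k n i] by (simp add: sz_0)
    have "card {e \<in> transversal k {0..<n} (block k n). v \<in> e} = (\<Prod>j\<in>{..<k} - {i}. sz k n j)"
      using card_transversal_through[OF disjoint_family_on_mono[OF _ disjoint_family_block] _ i(1,3)]
        UN_block[of k n k] off_self[of k n] k by simp
    also have "\<dots> = max_prod (k - 1) (n - ceil_div k n)"
    proof -
      have "ceil_div k n * (\<Prod>j\<in>{..<k} - {i}. sz k n j) = (\<Prod>j<k. sz k n j)"
        using prod.remove[of "{..<k}" i "sz k n"] i(1) szi by simp
      also have "\<dots> = ceil_div k n * max_prod (k - 1) (n - ceil_div k n)"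
        using prod_sz[of k n] max_prod_split_off_ceil_div[of k n] k by simp
      finally show ?thesis using ceil_div_pos[of n k] kn k by simp
    qed
    finally have "max_prod (k - 1) (n - ceil_div k n) = card {e \<in> transversal k {0..<n} (block k n). v \<in> e}" ..
    moreover have "delta_rec k (ceil_div k n) \<le> deg (Hk k (sz k n i)) (v - off k n i)"
      using less.IH[OF sz_less[OF k kn, of i] good] szi by simp
    ultimately show ?thesis
      using delta_rec_eq[OF k kn] deg_Hk_ge[OF k kn i(1,3)] by simp
  qed
qed

lemma delta_rec_le_delta:
  assumes k: "3 \<le> k"
  shows "delta_rec k n \<le> delta k n"
proof (cases "n = 0")
  case True
  then show ?thesis using k by (simp add: delta_rec_less)
next
  case False
  then have "goodH k n (SOME v. goodH k n v)" using goodH_0[OF k] by (blast intro: someI)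
  then show ?thesis unfolding delta_def by (rule delta_rec_le_deg_Hk[OF k])
qed

theorem lemma5p4:
  fixes k :: nat and V :: "'a set" and E :: "'a set set" and v :: 'a
  assumes "3 \<le> k" and "inG k V E" and "good k V E v"
  shows "deg E v \<le> delta k (card V)"
  using deg_le_delta_rec[OF assms(1,3)] delta_rec_le_delta[OF assms(1)] by (rule le_trans)

end
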